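(* Let $\mathcal{A}$ be a $3\times 3$ octonionic Hermitian matrix ($\mathcal{A}^\dagger=\mathcal{A}$), and let $v\in\mathbb{O}^3$, $\lambda\in\mathbb{O}$ satisfy $\mathcal{A}v=v\lambda$ and $v^\dagger v=1$. Then $$v^\dagger(\mathcal{A}v)=\lambda \qquad\text{and}\qquad [v^\dagger,\mathcal{A},v]:=(v^\dagger\mathcal{A})v-v^\dagger(\mathcal{A}v)=-2\,\mathrm{Im}(\lambda).$$
   Context: $\mathbb{O}$ denotes the octonions; $v^\dagger$ is the conjugate transpose (row vector of conjugated entries); all products of vectors and matrices are computed entrywise with octonionic multiplication in the order written, parenthesized as indicated. $\mathrm{Im}(\lambda)=\tfrac12(\lambda-\overline{\lambda})$. $v\lambda$ means each component of $v$ multiplied on the right by $\lambda$. *)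

theory Defs
  imports Complex_Main
begin

text \<open>Quaternions via Cayley-Dickson doubling of the complex numbers:
  (a,b)(c,d) = (ac - conj(d) b, d a + b conj(c)), conj(a,b) = (conj a, -b).\<close>

datatype quat = Quat complex complex

instantiation quat :: "{zero, one, plus, minus, uminus, times}"
begin
definition "0 = Quat 0 0"
definition "1 = Quat 1 0"
fun plus_quat where "Quat a b + Quat c d = Quat (a + c) (b + d)"
fun minus_quat where "Quat a b - Quat c d = Quat (a - c) (b - d)"
fun uminus_quat where "- Quat a b = Quat (- a) (- b)"
fun times_quat where "Quat a b * Quat c d = Quat (a * c - cnj d * b) (d * a + b * cnj c)"
instance ..
end

fun quat_cnj :: "quat \<Rightarrow> quat" where "quat_cnj (Quat a b) = Quat (cnj a) (- b)"

instance quat :: ab_group_add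
proof
  fix x y z :: quat
  show "x + y + z = x + (y + z)" by (cases x; cases y; cases z) (simp add: algebra_simps)
  show "x + y = y + x" by (cases x; cases y) (simp add: algebra_simps)
  show "0 + x = x" by (cases x) (simp add: zero_quat_def)
  show "- x + x = 0" by (cases x) (simp add: zero_quat_def)
  show "x - y = x + - y" by (cases x; cases y) simp
qed

text \<open>Octonions via Cayley-Dickson doubling of the quaternions (same formulas).\<close>

datatype oct = Oct quat quat

instantiation oct :: "{zero, one, plus, minus, uminus, times}"
begin
definition "0 = Oct 0 0"
definition "1 = Oct 1 0"
fun plus_oct where "Oct a b + Oct c d = Oct (a + c) (b + d)"
fun minus_oct where "Oct a b - Oct c d = Oct (a - c) (b - d)"
fun uminus_oct where "- Oct a b = Oct (- a) (- b)"
fun times_oct where "Oct a b * Oct c d = Oct (a * c - quat_cnj d * b) (d * a + b * quat_cnj c)"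
instance ..
end

instance oct :: ab_group_add
proof
  fix x y z :: oct
  show "x + y + z = x + (y + z)" by (cases x; cases y; cases z) (simp add: algebra_simps)
  show "x + y = y + x" by (cases x; cases y) (simp add: algebra_simps)
  show "0 + x = x" by (cases x) (simp add: zero_oct_def)
  show "- x + x = 0" by (cases x) (simp add: zero_oct_def)
  show "x - y = x + - y" by (cases x; cases y) simp
qed

fun oct_cnj :: "oct \<Rightarrow> oct" where "oct_cnj (Oct a b) = Oct (quat_cnj a) (- b)"

definition oct_of_real :: "real \<Rightarrow> oct" where
  "oct_of_real r = Oct (Quat (complex_of_real r) 0) 0"

definition oct_Im :: "oct \<Rightarrow> oct" where
  "oct_Im x = oct_of_real (1/2) * (x - oct_cnj x)"

definition hermitian3 :: "(nat \<Rightarrow> nat \<Rightarrow> oct) \<Rightarrow> bool" where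
  "hermitian3 A \<longleftrightarrow> (\<forall>i<3. \<forall>j<3. A j i = oct_cnj (A i j))"

definition mat_vec3 :: "(nat \<Rightarrow> nat \<Rightarrow> oct) \<Rightarrow> (nat \<Rightarrow> oct) \<Rightarrow> nat \<Rightarrow> oct" where
  "mat_vec3 A v i = (\<Sum>j<3. A i j * v j)"

definition dag_mat3 :: "(nat \<Rightarrow> oct) \<Rightarrow> (nat \<Rightarrow> nat \<Rightarrow> oct) \<Rightarrow> nat \<Rightarrow> oct" where
  "dag_mat3 v A j = (\<Sum>i<3. oct_cnj (v i) * A i j)"

definition dag_vec3 :: "(nat \<Rightarrow> oct) \<Rightarrow> (nat \<Rightarrow> oct) \<Rightarrow> oct" where
  "dag_vec3 w u = (\<Sum>i<3. oct_cnj (w i) * u i)"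

definition row_vec3 :: "(nat \<Rightarrow> oct) \<Rightarrow> (nat \<Rightarrow> oct) \<Rightarrow> oct" where
  "row_vec3 r u = (\<Sum>i<3. r i * u i)"

end

theory Submission
  imports Defs
begin

text \<open>Octonions are alternative, so \<open>(x\<^sup>* x) y = x\<^sup>* (x y)\<close> and \<open>(y x\<^sup>*) x = y (x\<^sup>* x)\<close>.
  Hence \<open>v\<^sup>\<dagger>(v \<lambda>) = (v\<^sup>\<dagger> v) \<lambda> = \<lambda>\<close>, summand by summand. Hermiticity turns
  \<open>v\<^sup>\<dagger>\<A>\<close> into the conjugate of \<open>\<A> v = v \<lambda>\<close>, i.e. into \<open>\<lambda>\<^sup>* v\<^sup>\<dagger>\<close>, and the same identity
  gives \<open>(v\<^sup>\<dagger>\<A>) v = \<lambda>\<^sup>* (v\<^sup>\<dagger> v) = \<lambda>\<^sup>*\<close>. The associator is therefore \<open>\<lambda>\<^sup>* - \<lambda> = -2 Im \<lambda>\<close>.\<close>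

lemma oct_cases:
  obtains a b c d e f g h where
    "x = Oct (Quat (Complex a b) (Complex c d)) (Quat (Complex e f) (Complex g h))"
  by (metis complex.exhaust quat.exhaust oct.exhaust)

lemma oct_mult_1_left [simp]: "1 * x = (x :: oct)"
  by (cases x rule: oct_cases) (simp add: one_oct_def one_quat_def zero_quat_def)

lemma oct_mult_1_right [simp]: "x * 1 = (x :: oct)"
  by (cases x rule: oct_cases) (simp add: one_oct_def one_quat_def zero_quat_def)

lemma oct_mult_0_left [simp]: "0 * x = (0 :: oct)"
  by (cases x rule: oct_cases) (simp add: zero_oct_def zero_quat_def)

lemma oct_mult_0_right [simp]: "x * 0 = (0 :: oct)"
  by (cases x rule: oct_cases) (simp add: zero_oct_def zero_quat_def)

lemma oct_distrib_left: "x * (y + z) = x * y + x * (z :: oct)"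
  by (cases x rule: oct_cases; cases y rule: oct_cases; cases z rule: oct_cases)
    (simp add: complex_eq_iff algebra_simps)

lemma oct_distrib_right: "(x + y) * z = x * z + y * (z :: oct)"
  by (cases x rule: oct_cases; cases y rule: oct_cases; cases z rule: oct_cases)
    (simp add: complex_eq_iff algebra_simps)

lemma oct_cnj_0 [simp]: "oct_cnj 0 = 0"
  by (simp add: zero_oct_def zero_quat_def)

lemma oct_cnj_add: "oct_cnj (x + y) = oct_cnj x + oct_cnj y"
  by (cases x rule: oct_cases; cases y rule: oct_cases) simp

lemma oct_cnj_mult: "oct_cnj (x * y) = oct_cnj y * oct_cnj x"
  by (cases x rule: oct_cases; cases y rule: oct_cases) (simp add: complex_eq_iff algebra_simps)

lemma oct_cnj_mult_assoc_left: "(oct_cnj x * x) * y = oct_cnj x * (x * y)"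
  by (cases x rule: oct_cases; cases y rule: oct_cases) (simp add: complex_eq_iff algebra_simps)

lemma oct_cnj_mult_assoc_right: "(y * oct_cnj x) * x = y * (oct_cnj x * x)"
  by (cases x rule: oct_cases; cases y rule: oct_cases) (simp add: complex_eq_iff algebra_simps)

lemma oct_cnj_diff_self: "oct_cnj x - x = oct_of_real (-2) * oct_Im x"
  by (cases x rule: oct_cases) (simp add: complex_eq_iff oct_Im_def oct_of_real_def zero_quat_def)

lemma oct_sum_distrib_right: "sum f I * z = (\<Sum>i\<in>I. f i * z :: oct)"
  by (induction I rule: infinite_finite_induct) (simp_all add: oct_distrib_right)

lemma oct_sum_distrib_left: "z * sum f I = (\<Sum>i\<in>I. z * f i :: oct)"
  by (induction I rule: infinite_finite_induct) (simp_all add: oct_distrib_left)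

lemma oct_cnj_sum: "oct_cnj (sum f I) = (\<Sum>i\<in>I. oct_cnj (f i))"
  by (induction I rule: infinite_finite_induct) (simp_all add: oct_cnj_add)

lemma dag_vec3_mult_right: "dag_vec3 v (\<lambda>i. v i * c) = dag_vec3 v v * c"
  by (simp add: dag_vec3_def oct_sum_distrib_right oct_cnj_mult_assoc_left)

lemma row_vec3_cnj_mult_left: "row_vec3 (\<lambda>i. c * oct_cnj (v i)) v = c * dag_vec3 v v"
  by (simp add: row_vec3_def dag_vec3_def oct_sum_distrib_left oct_cnj_mult_assoc_right)

lemma dag_mat3_hermitian:
  assumes "hermitian3 A" and "j < 3"
  shows "dag_mat3 v A j = oct_cnj (mat_vec3 A v j)"
proof -
  have "A i j = oct_cnj (A j i)" if "i < 3" for i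
    using assms that unfolding hermitian3_def by blast
  then show ?thesis
    unfolding dag_mat3_def mat_vec3_def oct_cnj_sum by (intro sum.cong) (simp_all add: oct_cnj_mult)
qed

theorem mainTheorem5:
  fixes A :: "nat \<Rightarrow> nat \<Rightarrow> oct" and v :: "nat \<Rightarrow> oct" and lam :: oct
  assumes "hermitian3 A"
    and "\<forall>i<3. mat_vec3 A v i = v i * lam"
    and "dag_vec3 v v = 1"
  shows "dag_vec3 v (mat_vec3 A v) = lam \<and>
         row_vec3 (dag_mat3 v A) v - dag_vec3 v (mat_vec3 A v) = oct_of_real (-2) * oct_Im lam"
proof -
  have "dag_vec3 v (mat_vec3 A v) = dag_vec3 v (\<lambda>i. v i * lam)"
    unfolding dag_vec3_def using assms(2) by (intro sum.cong) auto
  also have "\<dots> = lam"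
    using assms(3) by (simp add: dag_vec3_mult_right)
  finally have eigenvalue: "dag_vec3 v (mat_vec3 A v) = lam" .
  have "row_vec3 (dag_mat3 v A) v = row_vec3 (\<lambda>j. oct_cnj lam * oct_cnj (v j)) v"
    unfolding row_vec3_def using assms(1,2)
    by (intro sum.cong) (simp_all add: dag_mat3_hermitian oct_cnj_mult)
  also have "\<dots> = oct_cnj lam"
    using assms(3) by (simp add: row_vec3_cnj_mult_left)
  finally show ?thesis
    using eigenvalue by (simp add: oct_cnj_diff_self)
qed

end
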